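(* Assume $U_1>2U_2$, $0<\varepsilon\ll U_2$ and $U_2/\varepsilon\notin\mathbb N$. Let $(\bar\eta,\eta)$ be a move with $\bar\eta\in\mathcal B$. If $\Delta s:=s(\eta)-s(\bar\eta)=-1$ and $p_2(\bar\eta)\ge\ell_2^*$, then one of the following holds: (i) $\eta\in\mathcal B$; (ii) $\bar\eta\in\mathcal P_1$, $H(\bar\eta)=\Gamma$ and $\eta\in\mathcal B$; (iii) $\eta\notin\mathcal B$ and $\max\{H(\bar\eta),H(\eta)\}>\Gamma$, with $\bar\eta\notin\mathcal P_1\cup\mathcal P_2$.
   Context: Let $L\in\mathbb N$, $\Lambda=\{0,\dots,L\}^2$, $\partial^-\Lambda=\{x\in\Lambda:\exists y\notin\Lambda,\ |y-x|=1\}$, $\Lambda_0=\Lambda\setminus\partial^-\Lambda$, configurations $\eta\in\{0,1\}^\Lambda$ with energy $H(\eta)=-U_1\sum_{(x,y)\in\Lambda^*_{0,h}}\eta(x)\eta(y)-U_2\sum_{(x,y)\in\Lambda^*_{0,v}}\eta(x)\eta(y)+\Delta\sum_{x\in\Lambda}\eta(x)$, with $\Lambda^*_{0,h}$ ($\Lambda^*_{0,v}$) the horizontal (vertical) unoriented nearest-neighbour bonds inside $\Lambda_0$, $U_1,U_2,\Delta>0$. $\varepsilon=U_1+U_2-\Delta$, $\ell_2^*=\lceil U_2/\varepsilon\rceil$, $s^*=3\ell_2^*-1$, $\Gamma=U_1\ell_2^*+2U_2\ell_2^*+U_1-U_2-2\varepsilon(\ell_2^* )^2+3\varepsilon\ell_2^*-2\varepsilon$.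 A move is a pair $(\bar\eta,\eta)$ with $\eta\ne\bar\eta$ obtained from $\bar\eta$ by exchanging the values at two nearest-neighbour sites of $\Lambda$, or by setting the value at some site of $\partial^-\Lambda$ to $0$, or setting it to $1$. Geometry: a free particle is an occupied site in $\partial^-\Lambda$ or an occupied site of $\Lambda_0$ with no occupied nearest neighbour in $\Lambda_0$; $n(\eta)$ is the number of free particles; $\eta_{cl}$ is the set of occupied sites of $\Lambda_0$ that are not free. $C(\eta_{cl})$ is the union of closed unit squares centred at sites of $\eta_{cl}$; $g_1$ ($g_2$) is half the horizontal (vertical) length of $\partial C(\eta_{cl})$; $p_1$ ($p_2$) is the number of columns (rows) of $\mathbb Z^2$ meeting $C(\eta_{cl})$; $g_i'=g_i-p_i$; monotone means $g_1'=g_2'=0$; $s=p_1+p_2$; $v=p_1p_2-|\eta_{cl}|$; $p_{min}=\min\{p_1,p_2\}$, $p_{max}=\max\{p_1,p_2\}$. The circumscribed rectangle of $\eta_{cl}$ has horizontal side $p_1$, vertical side $p_2$. $\mathcal P_1$: configurations with $n=0$, $v=2\ell_2^*-2$, $\eta_{cl}$ connected, $g_1'=0$, $g_2'=1$, circumscribed rectangle of horizontal side $2\ell_2^*-1$ and vertical side $\ell_2^*$. $\mathcal P_2$: configurations with $n=1$, $v=\ell_2^*-1$, $\eta_{cl}$ connected and monotone, circumscribed rectangle of horizontal side $2\ell_2^*-2$ and vertical side $\ell_2^*$. $\mathcal B$ is the set of $\eta$ such that: $s(\eta)\le s^*-2$; or $s(\eta)\ge s^*-1$ and $p_2(\eta)\le\ell_2^*-1$;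 or $s(\eta)=s^*-1$, $p_2(\eta)\ge\ell_2^*$ and $v(\eta)\ge p_{min}(\eta)-1$; or $s(\eta)\ge s^*$, $p_2(\eta)=\ell_2^*$ and $v(\eta)\ge p_{max}(\eta)-1$. *)

theory Defs
  imports "HOL-Analysis.Analysis"
begin

type_synonym site = "int \<times> int"
type_synonym config = "site set"   \<comment> \<open>set of occupied sites; a configuration is a subset of Lambda\<close>

definition Lam :: "nat \<Rightarrow> site set" where
  "Lam L = {0..int L} \<times> {0..int L}"

definition nbr :: "site \<Rightarrow> site \<Rightarrow> bool" where
  "nbr x y \<longleftrightarrow> \<bar>fst x - fst y\<bar> + \<bar>snd x - snd y\<bar> = 1"

definition bdry :: "nat \<Rightarrow> site set" where
  "bdry L = {x \<in> Lam L. \<exists>y. y \<notin> Lam L \<and> nbr x y}"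

definition Lam0 :: "nat \<Rightarrow> site set" where
  "Lam0 L = Lam L - bdry L"

definition hbonds :: "nat \<Rightarrow> config \<Rightarrow> nat" where
  "hbonds L \<eta> = card {x. x \<in> Lam0 L \<and> (fst x + 1, snd x) \<in> Lam0 L \<and> x \<in> \<eta> \<and> (fst x + 1, snd x) \<in> \<eta>}"

definition vbonds :: "nat \<Rightarrow> config \<Rightarrow> nat" where
  "vbonds L \<eta> = card {x. x \<in> Lam0 L \<and> (fst x, snd x + 1) \<in> Lam0 L \<and> x \<in> \<eta> \<and> (fst x, snd x + 1) \<in> \<eta>}"

definition H :: "nat \<Rightarrow> real \<Rightarrow> real \<Rightarrow> real \<Rightarrow> config \<Rightarrow> real" where
  "H L U1 U2 \<Delta> \<eta> = - U1 * real (hbonds L \<eta>) - U2 * real (vbonds L \<eta>) + \<Delta> * real (card (\<eta> \<inter> Lam L))"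

definition eps :: "real \<Rightarrow> real \<Rightarrow> real \<Rightarrow> real" where
  "eps U1 U2 \<Delta> = U1 + U2 - \<Delta>"

definition lstar :: "real \<Rightarrow> real \<Rightarrow> real \<Rightarrow> nat" where
  "lstar U1 U2 \<Delta> = nat \<lceil>U2 / eps U1 U2 \<Delta>\<rceil>"

definition sstar :: "real \<Rightarrow> real \<Rightarrow> real \<Rightarrow> int" where
  "sstar U1 U2 \<Delta> = 3 * int (lstar U1 U2 \<Delta>) - 1"

definition Gamma :: "real \<Rightarrow> real \<Rightarrow> real \<Rightarrow> real" where
  "Gamma U1 U2 \<Delta> = (let l = real (lstar U1 U2 \<Delta>); e = eps U1 U2 \<Delta> in
     U1 * l + 2 * U2 * l + U1 - U2 - 2 * e * l\<^sup>2 + 3 * e * l - 2 * e)"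

definition swap :: "site \<Rightarrow> site \<Rightarrow> config \<Rightarrow> config" where
  "swap x y \<eta> = (\<eta> - {x, y}) \<union> (if x \<in> \<eta> then {y} else {}) \<union> (if y \<in> \<eta> then {x} else {})"

definition is_move :: "nat \<Rightarrow> config \<Rightarrow> config \<Rightarrow> bool" where
  "is_move L \<eta>b \<eta> \<longleftrightarrow> \<eta>b \<subseteq> Lam L \<and> \<eta> \<noteq> \<eta>b \<and>
     ((\<exists>x y. x \<in> Lam L \<and> y \<in> Lam L \<and> nbr x y \<and> \<eta> = swap x y \<eta>b)
      \<or> (\<exists>x \<in> bdry L. \<eta> = \<eta>b - {x})
      \<or> (\<exists>x \<in> bdry L. \<eta> = insert x \<eta>b))"

definition free_particles :: "nat \<Rightarrow> config \<Rightarrow> site set" where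
  "free_particles L \<eta> = {x \<in> \<eta> \<inter> Lam L. x \<in> bdry L \<or>
      (x \<in> Lam0 L \<and> \<not> (\<exists>y \<in> \<eta> \<inter> Lam0 L. nbr x y))}"

definition nfree :: "nat \<Rightarrow> config \<Rightarrow> nat" where
  "nfree L \<eta> = card (free_particles L \<eta>)"

definition cl :: "nat \<Rightarrow> config \<Rightarrow> site set" where
  "cl L \<eta> = {x \<in> \<eta> \<inter> Lam0 L. \<exists>y \<in> \<eta> \<inter> Lam0 L. nbr x y}"

definition Csq :: "site set \<Rightarrow> (real \<times> real) set" where
  "Csq A = (\<Union>a\<in>A. cbox (real_of_int (fst a) - 1/2, real_of_int (snd a) - 1/2)
                          (real_of_int (fst a) + 1/2, real_of_int (snd a) + 1/2))"

text \<open>Horizontal (vertical) length of the boundary of C(A): number of horizontal (vertical) unit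
  edges separating a site of A from a vertically (horizontally) adjacent site not in A.\<close>
definition hlen :: "site set \<Rightarrow> nat" where
  "hlen A = card {x \<in> A. (fst x, snd x + 1) \<notin> A} + card {x \<in> A. (fst x, snd x - 1) \<notin> A}"

definition vlen :: "site set \<Rightarrow> nat" where
  "vlen A = card {x \<in> A. (fst x + 1, snd x) \<notin> A} + card {x \<in> A. (fst x - 1, snd x) \<notin> A}"

definition g1 :: "site set \<Rightarrow> real" where "g1 A = real (hlen A) / 2"
definition g2 :: "site set \<Rightarrow> real" where "g2 A = real (vlen A) / 2"

definition p1 :: "site set \<Rightarrow> nat" where "p1 A = card (fst ` A)"
definition p2 :: "site set \<Rightarrow> nat" where "p2 A = card (snd ` A)"

definition g1' :: "site set \<Rightarrow> real" where "g1' A = g1 A - real (p1 A)"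
definition g2' :: "site set \<Rightarrow> real" where "g2' A = g2 A - real (p2 A)"

definition monotone :: "site set \<Rightarrow> bool" where
  "monotone A \<longleftrightarrow> g1' A = 0 \<and> g2' A = 0"

definition ssz :: "site set \<Rightarrow> int" where "ssz A = int (p1 A) + int (p2 A)"
definition vac :: "site set \<Rightarrow> int" where "vac A = int (p1 A) * int (p2 A) - int (card A)"
definition pmin :: "site set \<Rightarrow> int" where "pmin A = int (min (p1 A) (p2 A))"
definition pmax :: "site set \<Rightarrow> int" where "pmax A = int (max (p1 A) (p2 A))"

definition cl_connected :: "site set \<Rightarrow> bool" where
  "cl_connected A \<longleftrightarrow> connected (Csq A)"

definition P1 :: "nat \<Rightarrow> nat \<Rightarrow> config set" where
  "P1 L l = {\<eta>. \<eta> \<subseteq> Lam L \<and> nfree L \<eta> = 0 \<and> vac (cl L \<eta>) = 2 * int l - 2 \<and>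
     cl_connected (cl L \<eta>) \<and> g1' (cl L \<eta>) = 0 \<and> g2' (cl L \<eta>) = 1 \<and>
     p1 (cl L \<eta>) = 2 * l - 1 \<and> p2 (cl L \<eta>) = l}"

definition P2 :: "nat \<Rightarrow> nat \<Rightarrow> config set" where
  "P2 L l = {\<eta>. \<eta> \<subseteq> Lam L \<and> nfree L \<eta> = 1 \<and> vac (cl L \<eta>) = int l - 1 \<and>
     cl_connected (cl L \<eta>) \<and> monotone (cl L \<eta>) \<and>
     p1 (cl L \<eta>) = 2 * l - 2 \<and> p2 (cl L \<eta>) = l}"

definition Bset :: "nat \<Rightarrow> nat \<Rightarrow> config set" where
  "Bset L l = {\<eta>. let A = cl L \<eta>; s = ssz A; ss = 3 * int l - 1 in
      s \<le> ss - 2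
    \<or> (s \<ge> ss - 1 \<and> int (p2 A) \<le> int l - 1)
    \<or> (s = ss - 1 \<and> p2 A \<ge> l \<and> vac A \<ge> pmin A - 1)
    \<or> (s \<ge> ss \<and> p2 A = l \<and> vac A \<ge> pmax A - 1)}"

end

theory Submission
  imports Defs
begin

text \<open>
  Write the energy of a configuration as \<open>(U1 + U2 - \<epsilon>) n + U1 R + U2 C - \<epsilon> |A|\<close>, where \<open>A\<close> is
  its cluster, \<open>n\<close> the number of free particles and \<open>R\<close>, \<open>C\<close> the numbers of sites of \<open>A\<close> without
  a right, resp. upper, neighbour in \<open>A\<close>; \<open>R\<close> and \<open>C\<close> are at least the numbers of rows and
  columns of \<open>A\<close>. If \<open>\<eta>b \<in> B\<close>, \<open>s\<close> drops by one and \<open>\<eta> \<notin> B\<close>, then the cluster of \<open>\<eta>b\<close> has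
  \<open>l*\<close> rows, at least \<open>2 l* - 1\<close> columns and at most \<open>p1 (l* - 1) + 1\<close> sites. If moreover
  \<open>H \<eta>b \<le> \<Gamma>\<close>, comparing with \<open>\<Gamma>\<close> leaves no free particle and gives \<open>R \<le> l* + 1\<close>, with equality
  only for the extremal shape. The move is then a slide of a cluster particle, and leaving \<open>B\<close>
  forces the cluster to lose a particle: a size-preserving slide would empty a one-site column,
  and cutting the cluster at that column gives two blocks that share at most one row (by the
  bound on \<open>R\<close>) and hold too few sites. The released particle pushes \<open>H \<eta>\<close> above \<open>\<Gamma>\<close>. The same
  counting rules out \<open>\<eta>b \<in> P1\<close>, and the column bound rules out \<open>P2\<close>.
\<close>

section \<open>Row ends, bonds and bounding boxes\<close>

definition horiz_ends :: "int \<Rightarrow> site set \<Rightarrow> site set" where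
  "horiz_ends d A = {z \<in> A. (fst z + d, snd z) \<notin> A}"

definition top_ends :: "site set \<Rightarrow> site set" where
  "top_ends A = {z \<in> A. (fst z, snd z + 1) \<notin> A}"

definition horiz_bonds :: "site set \<Rightarrow> nat" where
  "horiz_bonds A = card {z \<in> A. (fst z + 1, snd z) \<in> A}"

definition vert_bonds :: "site set \<Rightarrow> nat" where
  "vert_bonds A = card {z \<in> A. (fst z, snd z + 1) \<in> A}"

lemma card_eq_horiz_bonds_add_ends:
  assumes "finite A"
  shows "card A = horiz_bonds A + card (horiz_ends 1 A)"
  using card_Int_Diff[OF assms, of "{z. (fst z + 1, snd z) \<in> A}"]
  unfolding horiz_bonds_def horiz_ends_def by (simp add: Int_def set_diff_eq)

lemma card_eq_vert_bonds_add_ends: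
  assumes "finite A"
  shows "card A = vert_bonds A + card (top_ends A)"
  using card_Int_Diff[OF assms, of "{z. (fst z, snd z + 1) \<in> A}"]
  unfolding vert_bonds_def top_ends_def by (simp add: Int_def set_diff_eq)

lemma card_horiz_ends_left:
  assumes "finite A"
  shows "card (horiz_ends (-1) A) = card (horiz_ends 1 A)"
proof -
  let ?shift = "\<lambda>z::site. (fst z + 1, snd z)"
  have "{z \<in> A. (fst z - 1, snd z) \<in> A} = ?shift ` {z \<in> A. ?shift z \<in> A}"
    by (force intro: image_eqI[where x = "(fst _ - 1, snd _)"])
  moreover have "inj ?shift"
    by (auto simp: inj_on_def prod_eq_iff)
  ultimately have "card {z \<in> A. (fst z - 1, snd z) \<in> A} = horiz_bonds A"
    unfolding horiz_bonds_def by (simp add: card_image inj_on_subset)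
  moreover have "card A = card {z \<in> A. (fst z - 1, snd z) \<in> A} + card (horiz_ends (-1) A)"
    using card_Int_Diff[OF assms, of "{z. (fst z - 1, snd z) \<in> A}"]
    unfolding horiz_ends_def by (simp add: Int_def set_diff_eq)
  ultimately show ?thesis
    using card_eq_horiz_bonds_add_ends[OF assms] by simp
qed

lemma vlen_eq_horiz_ends: "finite A \<Longrightarrow> vlen A = 2 * card (horiz_ends 1 A)"
  using card_horiz_ends_left[of A] unfolding vlen_def horiz_ends_def by simp

lemma ex_row_extremes:
  fixes B :: "site set" and d :: int
  assumes fin: "finite B"
  shows "\<exists>g. \<forall>k\<in>snd ` B.
    g k \<in> B \<and> snd (g k) = k \<and> (\<forall>z\<in>B. snd z = k \<longrightarrow> d * fst z \<le> d * fst (g k))"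
proof (rule bchoice, rule ballI)
  fix k assume k: "k \<in> snd ` B"
  let ?R = "{z \<in> B. snd z = k}"
  have "Max ((\<lambda>z. d * fst z) ` ?R) \<in> (\<lambda>z. d * fst z) ` ?R"
    using fin k by (intro Max_in) auto
  then obtain y where y: "y \<in> ?R" "d * fst y = Max ((\<lambda>z. d * fst z) ` ?R)"
    by auto
  have "d * fst z \<le> d * fst y" if "z \<in> ?R" for z
    unfolding y(2) using fin that by (intro Max_ge) auto
  then show "\<exists>y. y \<in> B \<and> snd y = k \<and> (\<forall>z\<in>B. snd z = k \<longrightarrow> d * fst z \<le> d * fst y)"
    using y(1) by blast
qed

lemma row_extreme_in_horiz_ends:
  assumes d: "d = 1 \<or> d = -1" and "z \<in> B" "B \<subseteq> A"
    and extreme: "\<forall>z'\<in>B. snd z' = snd z \<longrightarrow> d * fst z' \<le> d * fst z"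
    and closed: "(fst z + d, snd z) \<in> A \<Longrightarrow> (fst z + d, snd z) \<in> B"
  shows "z \<in> horiz_ends d A"
proof -
  have "(fst z + d, snd z) \<notin> A"
  proof
    assume "(fst z + d, snd z) \<in> A"
    then have "d * (fst z + d) \<le> d * fst z"
      using extreme closed by fastforce
    then show False
      using d by auto
  qed
  then show ?thesis
    using assms(2,3) unfolding horiz_ends_def by auto
qed

lemma finite_horiz_ends: "finite A \<Longrightarrow> finite (horiz_ends d A)"
  unfolding horiz_ends_def by simp

lemma card_rows_le_horiz_ends:
  fixes A :: "site set"
  assumes fin: "finite A" and d: "d = 1 \<or> d = -1"
  shows "p2 A \<le> card (horiz_ends d A)"
proof -
  obtain g where g: "\<forall>k\<in>snd ` A.
      g k \<in> A \<and> snd (g k) = k \<and> (\<forall>z\<in>A. snd z = k \<longrightarrow> d * fst z \<le> d * fst (g k))"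
    using ex_row_extremes[OF fin, where d = d] by blast
  have "g k \<in> horiz_ends d A" if k: "k \<in> snd ` A" for k
    using g[rule_format, OF k] by (intro row_extreme_in_horiz_ends[OF d _ order_refl]) auto
  then have ends: "g ` snd ` A \<subseteq> horiz_ends d A"
    by blast
  have "inj_on g (snd ` A)"
    by (rule inj_on_inverseI[where g = snd]) (use g in blast)
  then have "p2 A = card (g ` snd ` A)"
    unfolding p2_def by (simp add: card_image)
  also have "\<dots> \<le> card (horiz_ends d A)"
    by (rule card_mono[OF finite_horiz_ends[OF fin] ends])
  finally show ?thesis .
qed

lemma card_cols_le_top_ends:
  fixes A :: "site set"
  assumes fin: "finite A"
  shows "p1 A \<le> card (top_ends A)"
proof -
  let ?swap = "\<lambda>z::site. (snd z, fst z)"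
  have inj: "inj_on ?swap X" for X
    by (auto simp: inj_on_def prod_eq_iff)
  have "p1 A = p2 (?swap ` A)"
    unfolding p1_def p2_def by (simp add: image_image)
  also have "\<dots> \<le> card (horiz_ends 1 (?swap ` A))"
    using fin by (intro card_rows_le_horiz_ends) auto
  also have "horiz_ends 1 (?swap ` A) = ?swap ` top_ends A"
    unfolding horiz_ends_def top_ends_def by (auto simp: image_iff) (metis fst_conv snd_conv)
  also have "card (?swap ` top_ends A) = card (top_ends A)"
    by (rule card_image[OF inj])
  finally show ?thesis .
qed

lemma near_side_step:
  fixes A :: "site set" and c d :: int
  assumes d: "d = 1 \<or> d = -1" and blocked: "\<And>k. (c - d, k) \<in> A \<Longrightarrow> (c, k) \<notin> A"
    and y: "y \<in> A" "d * (fst y - c) < 0" and next_in: "(fst y + d, snd y) \<in> A"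
  shows "d * (fst y + d - c) < 0"
proof -
  have step: "d * (fst y + d - c) = d * (fst y - c) + 1"
    using d by (auto simp: algebra_simps)
  have "fst y + d \<noteq> c"
  proof
    assume at_c: "fst y + d = c"
    then have "(c - d, snd y) \<in> A"
      using y(1) by (metis add_diff_cancel_right' prod.collapse)
    then show False
      using blocked next_in at_c by simp
  qed
  then show ?thesis
    using step y(2) d by auto
qed

lemma card_rows_add_shared_rows_le_horiz_ends:
  fixes A :: "site set" and c d :: int
  assumes fin: "finite A" and d: "d = 1 \<or> d = -1"
    and blocked: "\<And>k. (c - d, k) \<in> A \<Longrightarrow> (c, k) \<notin> A"
  defines "Y \<equiv> {z \<in> A. d * (fst z - c) < 0}" and "W \<equiv> {z \<in> A. d * (fst z - c) > 0}"
  shows "p2 A + card (snd ` Y \<inter> snd ` W) \<le> card (horiz_ends d A)"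
proof -
  \<comment> \<open>Every row ends at its \<open>d\<close>-most site; a row met by both sides has a second end, the
    \<open>d\<close>-most site of the near side \<open>Y\<close>, because column \<open>c\<close> cannot be entered from \<open>Y\<close>.\<close>
  let ?S = "snd ` Y \<inter> snd ` W"
  have YA: "Y \<subseteq> A" and finY: "finite Y"
    using fin unfolding Y_def by auto
  obtain g where g: "\<forall>k\<in>snd ` A.
      g k \<in> A \<and> snd (g k) = k \<and> (\<forall>z\<in>A. snd z = k \<longrightarrow> d * fst z \<le> d * fst (g k))"
    using ex_row_extremes[OF fin, where d = d] by blast
  obtain h where h: "\<forall>k\<in>snd ` Y.
      h k \<in> Y \<and> snd (h k) = k \<and> (\<forall>z\<in>Y. snd z = k \<longrightarrow> d * fst z \<le> d * fst (h k))"
    using ex_row_extremes[OF finY, where d = d] by blast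
  have g_end: "g k \<in> horiz_ends d A" if "k \<in> snd ` A" for k
    using g[rule_format, OF that] by (intro row_extreme_in_horiz_ends[OF d _ order_refl]) auto
  have h_end: "h k \<in> horiz_ends d A" if "k \<in> snd ` Y" for k
    using h[rule_format, OF that] near_side_step[OF d blocked] YA
    by (intro row_extreme_in_horiz_ends[OF d _ YA]) (auto simp: Y_def)
  have g_W: "g k \<in> W" if k: "k \<in> ?S" for k
  proof -
    obtain w where w: "w \<in> W" "snd w = k"
      using IntD2[OF k] by (metis imageE)
    then have "k \<in> snd ` A"
      unfolding W_def by force
    note gk = g[rule_format, OF this]
    have "d * fst w \<le> d * fst (g k)"
      using gk w unfolding W_def by simp
    moreover have "d * (fst w - c) > 0"
      using w unfolding W_def by simp
    ultimately show ?thesis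
      using gk unfolding W_def by (simp add: right_diff_distrib)
  qed
  have disjoint: "g ` snd ` A \<inter> h ` ?S = {}"
  proof (rule ccontr)
    assume "g ` snd ` A \<inter> h ` ?S \<noteq> {}"
    then obtain k k' where k: "k \<in> snd ` A" "k' \<in> ?S" "g k = h k'"
      by blast
    then have "k' \<in> snd ` Y"
      by blast
    with k g h have "k = k'" "g k \<in> Y"
      by metis+
    moreover from this(1) have "g k \<in> W"
      using g_W k(2) by simp
    ultimately show False
      unfolding Y_def W_def by auto
  qed
  have card_g: "card (g ` snd ` A) = p2 A"
    unfolding p2_def by (rule card_image, rule inj_on_inverseI[where g = snd]) (use g in blast)
  have card_h: "card (h ` ?S) = card ?S"
    by (rule card_image, rule inj_on_inverseI[where g = snd]) (use h in blast)
  have sub: "g ` snd ` A \<union> h ` ?S \<subseteq> horiz_ends d A"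
    using g_end h_end by blast
  have "p2 A + card ?S = card (g ` snd ` A \<union> h ` ?S)"
    using finite_subset[OF sub finite_horiz_ends[OF fin]] disjoint card_g card_h
    by (simp add: card_Un_disjoint)
  also have "\<dots> \<le> card (horiz_ends d A)"
    by (rule card_mono[OF finite_horiz_ends[OF fin] sub])
  finally show ?thesis .
qed

lemma card_le_bounding_box:
  fixes B :: "site set"
  assumes "finite B"
  shows "card B \<le> p1 B * p2 B"
proof -
  have "B \<subseteq> fst ` B \<times> snd ` B"
    by (auto intro: rev_image_eqI)
  then show ?thesis
    unfolding p1_def p2_def using assms by (metis card_cartesian_product card_mono finite_SigmaI finite_imageI)
qed

lemma card_less_bounding_box:
  fixes B :: "site set"
  assumes "finite B" and "x \<in> fst ` B \<times> snd ` B" and "x \<notin> B"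
  shows "card B < p1 B * p2 B"
proof -
  have "B \<subseteq> fst ` B \<times> snd ` B"
    by (auto intro: rev_image_eqI)
  with assms(2,3) have "B \<subset> fst ` B \<times> snd ` B"
    by blast
  then show ?thesis
    unfolding p1_def p2_def using assms(1) by (metis card_cartesian_product psubset_card_mono finite_SigmaI finite_imageI)
qed

lemma nbr_sym: "nbr x y \<longleftrightarrow> nbr y x"
  unfolding nbr_def by (simp add: abs_minus_commute)

lemma nbr_horizontal:
  assumes "nbr p q" and "fst q \<noteq> fst p"
  shows "snd q = snd p" and "fst q = fst p + 1 \<or> fst q = fst p - 1"
  using assms unfolding nbr_def by linarith+

section \<open>Clusters with a one-site column\<close>

lemma column_singleton_split:
  fixes A :: "site set" and c j d :: int
  assumes fin: "finite A" and d: "d \<noteq> 0" and pA: "(c, j) \<in> A"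
    and alone: "\<forall>z\<in>A. fst z = c \<longrightarrow> z = (c, j)"
  defines "Y \<equiv> {z \<in> A. d * (fst z - c) < 0}" and "W \<equiv> {z \<in> A. d * (fst z - c) > 0}"
  shows "card A = card Y + card W + 1" and "p1 A = p1 Y + p1 W + 1"
    and "j \<in> snd ` W \<Longrightarrow> p2 A + card (snd ` Y \<inter> snd ` W) = p2 Y + p2 W"
proof -
  have A: "A = insert (c, j) (Y \<union> W)"
  proof (intro equalityI subsetI)
    fix z assume z: "z \<in> A"
    show "z \<in> insert (c, j) (Y \<union> W)"
    proof (cases "fst z = c")
      case True
      then show ?thesis
        using alone z by blast
    next
      case False
      then have "d * (fst z - c) < 0 \<or> d * (fst z - c) > 0"
        using d by (auto simp: zero_less_mult_iff mult_less_0_iff)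
      then show ?thesis
        using z unfolding Y_def W_def by blast
    qed
  qed (use pA in \<open>auto simp: Y_def W_def\<close>)
  have fin_YW: "finite Y" "finite W"
    using fin unfolding Y_def W_def by auto
  have sides: "Y \<inter> W = {}" "fst ` Y \<inter> fst ` W = {}" "c \<notin> fst ` Y \<union> fst ` W"
    unfolding Y_def W_def by auto
  have "(c, j) \<notin> Y \<union> W"
    unfolding Y_def W_def by simp
  then show "card A = card Y + card W + 1"
    using fin_YW sides(1) by (subst A) (simp add: card_Un_disjoint)
  have "fst ` A = insert c (fst ` Y \<union> fst ` W)"
    by (subst A) auto
  then show "p1 A = p1 Y + p1 W + 1"
    unfolding p1_def using fin_YW sides(2,3) by (simp add: card_Un_disjoint)
  show "p2 A + card (snd ` Y \<inter> snd ` W) = p2 Y + p2 W" if "j \<in> snd ` W"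
  proof -
    have "snd ` A = snd ` Y \<union> snd ` W"
      using that by (subst A) auto
    then show ?thesis
      unfolding p2_def using card_Un_Int[of "snd ` Y" "snd ` W"] fin_YW by simp
  qed
qed

lemma column_singleton_sides:
  fixes A :: "site set" and c j d :: int
  assumes no_isolated: "\<forall>z\<in>A. \<exists>y\<in>A. nbr z y" and d: "d = 1 \<or> d = -1"
    and pA: "(c, j) \<in> A" and alone: "\<forall>z\<in>A. fst z = c \<longrightarrow> z = (c, j)"
    and gap: "(c - d, j) \<notin> A" and u: "u \<in> A" "fst u = c - d"
  defines "Y \<equiv> {z \<in> A. d * (fst z - c) < 0}" and "W \<equiv> {z \<in> A. d * (fst z - c) > 0}"
  shows "(c + d, j) \<in> W" and "\<exists>v. {u, v} \<subseteq> Y \<and> v \<noteq> u"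
proof -
  obtain y where y: "y \<in> A" "nbr (c, j) y"
    using no_isolated pA by blast
  have "fst y \<noteq> c"
    using alone y unfolding nbr_def by force
  then have "snd y = j" "fst y = c + 1 \<or> fst y = c - 1"
    using nbr_horizontal[OF y(2)] by simp_all
  moreover have "y \<noteq> (c - d, j)"
    using gap y(1) by blast
  ultimately have "y = (c + d, j)"
    using d by (auto simp: prod_eq_iff)
  then show "(c + d, j) \<in> W"
    using y(1) d unfolding W_def by auto
  obtain v where v: "v \<in> A" "nbr u v"
    using no_isolated u(1) by blast
  have "v \<noteq> (c, j)"
  proof
    assume "v = (c, j)"
    then have "snd u = j"
      using v(2) u(2) d unfolding nbr_def by auto
    then show False
      using u gap by (metis prod.collapse)
  qed
  then have "fst v \<noteq> c"
    using alone v(1) by blast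
  moreover have "\<bar>fst u - fst v\<bar> \<le> 1"
    using v(2) unfolding nbr_def by linarith
  ultimately have "d * (fst v - c) < 0"
    using u(2) d by auto
  moreover have "d * (fst u - c) < 0"
    using u(2) d by auto
  moreover have "v \<noteq> u"
    using v(2) unfolding nbr_def by auto
  ultimately show "\<exists>v. {u, v} \<subseteq> Y \<and> v \<noteq> u"
    using u(1) v(1) unfolding Y_def by blast
qed

lemma two_blocks_bound:
  fixes a b r l :: int
  assumes a: "a \<ge> 1" and b: "b \<ge> 1" and r: "1 \<le> r" "r \<le> l" and ab: "a + b = 2 * l - 2"
  shows "a * r + b * (l + 1 - r) \<le> 2 * l * l - 3 * l + 1"
    and "r \<le> l - 1 \<Longrightarrow> 2 \<le> a * r \<Longrightarrow> l \<ge> 3 \<Longrightarrow> a * r + b * (l + 1 - r) \<le> 2 * l * l - 3 * l"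
proof -
  have identity: "a * r + b * (l + 1 - r) = 2 * l * l - 3 * l + 1 - (a - 1) * (l - r) - (r - 1) * (b - 1)"
  proof -
    have b_eq: "b = 2 * l - 2 - a"
      using ab by simp
    show ?thesis
      unfolding b_eq by (simp add: algebra_simps)
  qed
  have nonneg: "(a - 1) * (l - r) \<ge> 0" "(r - 1) * (b - 1) \<ge> 0"
    using a b r by simp_all
  then show "a * r + b * (l + 1 - r) \<le> 2 * l * l - 3 * l + 1"
    unfolding identity by linarith
  assume r_less: "r \<le> l - 1" and ar: "2 \<le> a * r" and l: "l \<ge> 3"
  have "(a - 1) * (l - r) \<ge> 1 \<or> (r - 1) * (b - 1) \<ge> 1"
  proof (cases "a \<ge> 2")
    case True
    then have "(a - 1) * (l - r) \<ge> 1 * 1"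
      using r_less by (intro mult_mono) auto
    then show ?thesis
      by simp
  next
    case False
    then have "a = 1"
      using a by simp
    then have "r \<ge> 2" "b \<ge> 2"
      using ar ab l by simp_all
    then have "(r - 1) * (b - 1) \<ge> 1 * 1"
      by (intro mult_mono) auto
    then show ?thesis
      by simp
  qed
  then show "a * r + b * (l + 1 - r) \<le> 2 * l * l - 3 * l"
    unfolding identity using nonneg by linarith
qed

lemma column_singleton_blocks:
  fixes A :: "site set" and c j d :: int
  assumes fin: "finite A" and no_isolated: "\<forall>z\<in>A. \<exists>y\<in>A. nbr z y"
    and d: "d = 1 \<or> d = -1" and pA: "(c, j) \<in> A" and alone: "\<forall>z\<in>A. fst z = c \<longrightarrow> z = (c, j)"
    and gap: "(c - d, j) \<notin> A" and u: "u \<in> A" "fst u = c - d"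
  defines "Y \<equiv> {z \<in> A. d * (fst z - c) < 0}" and "W \<equiv> {z \<in> A. d * (fst z - c) > 0}"
  shows "p1 A = p1 Y + p1 W + 1"
    and "p2 A + card (snd ` Y \<inter> snd ` W) = p2 Y + p2 W"
    and "p2 A + card (snd ` Y \<inter> snd ` W) \<le> card (horiz_ends 1 A)"
    and "card A \<le> p1 Y * p2 Y + p1 W * p2 W + 1"
    and "j \<in> snd ` Y \<Longrightarrow> card A \<le> p1 Y * p2 Y + p1 W * p2 W"
    and "p2 Y \<le> p2 A" and "j \<notin> snd ` Y \<Longrightarrow> p2 Y < p2 A"
    and "2 \<le> p1 Y * p2 Y" and "0 < p1 W" and "0 < p2 W"
proof -
  have d0: "d \<noteq> 0"
    using d by auto
  note split = column_singleton_split[OF fin d0 pA alone, folded Y_def W_def]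
  note sides = column_singleton_sides[OF no_isolated d pA alone gap u, folded Y_def W_def]
  have fin_YW: "finite Y" "finite W"
    using fin unfolding Y_def W_def by auto
  have jW: "j \<in> snd ` W"
    by (rule rev_image_eqI[OF sides(1)]) simp
  show "p1 A = p1 Y + p1 W + 1"
    by (rule split(2))
  show "p2 A + card (snd ` Y \<inter> snd ` W) = p2 Y + p2 W"
    by (rule split(3)[OF jW])
  have blocked: "(c, k) \<notin> A" if "(c - d, k) \<in> A" for k
    using alone gap that by auto
  have "card (horiz_ends d A) = card (horiz_ends 1 A)"
    using d card_horiz_ends_left[OF fin] by auto
  then show "p2 A + card (snd ` Y \<inter> snd ` W) \<le> card (horiz_ends 1 A)"
    using card_rows_add_shared_rows_le_horiz_ends[OF fin d blocked, folded Y_def W_def] by simp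
  show "card A \<le> p1 Y * p2 Y + p1 W * p2 W + 1"
    using split(1) card_le_bounding_box[OF fin_YW(1)] card_le_bounding_box[OF fin_YW(2)] by linarith
  show "card A \<le> p1 Y * p2 Y + p1 W * p2 W" if "j \<in> snd ` Y"
  proof -
    have "(c - d, j) \<in> fst ` Y \<times> snd ` Y"
      using sides(2) u(2) that by force
    moreover have "(c - d, j) \<notin> Y"
      using gap unfolding Y_def by simp
    ultimately have "card Y < p1 Y * p2 Y"
      by (rule card_less_bounding_box[OF fin_YW(1)])
    then show ?thesis
      using split(1) card_le_bounding_box[OF fin_YW(2)] by linarith
  qed
  have rows_Y: "snd ` Y \<subseteq> snd ` A"
    unfolding Y_def by auto
  then show "p2 Y \<le> p2 A"
    unfolding p2_def using fin by (simp add: card_mono)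
  show "p2 Y < p2 A" if "j \<notin> snd ` Y"
  proof -
    have "snd ` Y \<subset> snd ` A"
      using rows_Y that pA by force
    then show ?thesis
      unfolding p2_def using fin by (simp add: psubset_card_mono)
  qed
  obtain v where "{u, v} \<subseteq> Y" "v \<noteq> u"
    using sides(2) by blast
  then have "2 \<le> card Y"
    using card_mono[OF fin_YW(1), of "{u, v}"] by simp
  then show "2 \<le> p1 Y * p2 Y"
    using card_le_bounding_box[OF fin_YW(1)] by linarith
  show "0 < p1 W" "0 < p2 W"
    using sides(1) fin_YW(2) unfolding p1_def p2_def by (auto simp: card_gt_0_iff)
qed

lemma card_le_if_column_singleton:
  fixes A :: "site set" and l :: nat and c j d :: int
  assumes fin: "finite A" and no_isolated: "\<forall>z\<in>A. \<exists>y\<in>A. nbr z y"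
    and d: "d = 1 \<or> d = -1" and pA: "(c, j) \<in> A" and alone: "\<forall>z\<in>A. fst z = c \<longrightarrow> z = (c, j)"
    and gap: "(c - d, j) \<notin> A" and u: "u \<in> A" "fst u = c - d"
    and rows: "p2 A = l" and l: "l \<ge> 3"
    and ends: "card (horiz_ends 1 A) \<le> l + 1"
    and tight: "card (horiz_ends 1 A) = l + 1 \<Longrightarrow>
      p1 A = 2 * l - 1 \<and> int (card A) = int (p1 A) * (int l - 1) + 1"
  shows "int (card A) \<le> (int (p1 A) - 1) * (int l - 1) + 1"
proof -
  define Y where "Y = {z \<in> A. d * (fst z - c) < 0}"
  define W where "W = {z \<in> A. d * (fst z - c) > 0}"
  note blocks = column_singleton_blocks[OF fin no_isolated d pA alone gap u, folded Y_def W_def]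
  define a b r t S where "a = int (p1 Y)" and "b = int (p1 W)" and "r = int (p2 Y)"
    and "t = int (p2 W)" and "S = int (card (snd ` Y \<inter> snd ` W))"
  have cols: "int (p1 A) - 1 = a + b"
    using blocks(1) unfolding a_def b_def by simp
  have rows_YW: "int l + S = r + t"
    using blocks(2) rows unfolding r_def t_def S_def by simp
  have "int (card A) \<le> int (p1 Y * p2 Y + p1 W * p2 W + 1)"
    using blocks(4) by (simp only: of_nat_le_iff)
  then have box: "int (card A) \<le> a * r + b * t + 1"
    unfolding a_def b_def r_def t_def by simp
  have "int 2 \<le> int (p1 Y * p2 Y)"
    using blocks(8) by (simp only: of_nat_le_iff)
  then have pos: "b \<ge> 1" "t \<ge> 1" "2 \<le> a * r"
    using blocks(9,10) unfolding a_def b_def r_def t_def by simp_all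
  have "p1 Y \<noteq> 0" "p2 Y \<noteq> 0"
    using blocks(8) by (metis mult_eq_0_iff not_numeral_le_zero)+
  then have "a \<ge> 1" "r \<ge> 1"
    unfolding a_def r_def by simp_all
  have "r \<le> int l"
    using blocks(6) rows unfolding r_def by simp
  \<comment> \<open>The blocks share at most one row, and sharing one forces the extremal shape, which has too
    many sites for two blocks inside their bounding boxes.\<close>
  show ?thesis
  proof (cases "S = 0")
    case True
    then have "r \<le> int l - 1" "t \<le> int l - 1"
      using rows_YW pos \<open>r \<ge> 1\<close> by linarith+
    then have "a * r \<le> a * (int l - 1)" "b * t \<le> b * (int l - 1)"
      using \<open>a \<ge> 1\<close> pos by (simp_all add: mult_left_mono)
    then show ?thesis
      using box unfolding cols by (simp add: algebra_simps)
  next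
    case False
    then have "S = 1" and "card (horiz_ends 1 A) = l + 1"
      using blocks(3) ends rows unfolding S_def by linarith+
    then have "int (p1 A) = 2 * int l - 1" and card_A: "int (card A) = 2 * int l * int l - 3 * int l + 2"
      using tight l by (auto simp: algebra_simps of_nat_diff)
    then have ab: "a + b = 2 * int l - 2" and t_eq: "t = int l + 1 - r"
      using cols rows_YW \<open>S = 1\<close> by simp_all
    note bound = two_blocks_bound[OF \<open>a \<ge> 1\<close> pos(1) \<open>r \<ge> 1\<close> \<open>r \<le> int l\<close> ab, folded t_eq]
    show ?thesis
    proof (cases "j \<in> snd ` Y")
      case True
      then have "int (card A) \<le> int (p1 Y * p2 Y + p1 W * p2 W)"
        using blocks(5) by (simp only: of_nat_le_iff)
      then have "int (card A) \<le> a * r + b * t"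
        unfolding a_def b_def r_def t_def by simp
      then show ?thesis
        using bound(1) card_A by linarith
    next
      case False
      then have "r \<le> int l - 1"
        using blocks(7) rows unfolding r_def by simp
      then show ?thesis
        using bound(2) pos(3) l box card_A by linarith
    qed
  qed
qed

section \<open>Slides leaving B\<close>

definition B_cluster :: "nat \<Rightarrow> site set \<Rightarrow> bool" where
  "B_cluster l A \<longleftrightarrow> (let s = ssz A; ss = 3 * int l - 1 in
      s \<le> ss - 2
    \<or> (s \<ge> ss - 1 \<and> int (p2 A) \<le> int l - 1)
    \<or> (s = ss - 1 \<and> p2 A \<ge> l \<and> vac A \<ge> pmin A - 1)
    \<or> (s \<ge> ss \<and> p2 A = l \<and> vac A \<ge> pmax A - 1))"

lemma Bset_iff_B_cluster: "\<eta> \<in> Bset L l \<longleftrightarrow> B_cluster l (cl L \<eta>)"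
  unfolding Bset_def B_cluster_def by (simp add: Let_def)

lemma card_lower_if_not_B_cluster:
  assumes not_B: "\<not> B_cluster l A"
  shows "p2 A = l \<Longrightarrow> p1 A = 2 * l - 2 \<Longrightarrow> l \<ge> 2 \<Longrightarrow>
      int (card A) \<ge> 2 * int l * int l - 3 * int l + 2"
    and "p2 A = l \<Longrightarrow> p1 A \<ge> 2 * l - 2 \<Longrightarrow> l \<ge> 2 \<Longrightarrow>
      int (card A) \<ge> int (p1 A) * (int l - 1) + 2"
    and "p2 A = l + 1 \<Longrightarrow> p1 A = 2 * l - 3 \<Longrightarrow> l \<ge> 4 \<Longrightarrow>
      int (card A) \<ge> 2 * int l * int l - 2 * int l - 2"
proof -
  show square: "int (card A) \<ge> 2 * int l * int l - 3 * int l + 2"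
    if rows: "p2 A = l" and cols: "p1 A = 2 * l - 2" and l: "l \<ge> 2"
  proof -
    have cols': "int (p1 A) = 2 * int l - 2"
      using cols l by simp
    then have "ssz A = 3 * int l - 2" "pmin A = int l"
      using rows l unfolding ssz_def pmin_def by simp_all
    then have "vac A < int l - 1"
      using not_B rows unfolding B_cluster_def Let_def by simp
    moreover have "int (p1 A) * int (p2 A) = 2 * int l * int l - 2 * int l"
      unfolding cols' rows by (simp add: algebra_simps)
    ultimately show ?thesis
      unfolding vac_def by linarith
  qed
  show "int (card A) \<ge> int (p1 A) * (int l - 1) + 2"
    if rows: "p2 A = l" and cols: "p1 A \<ge> 2 * l - 2" and l: "l \<ge> 2"
  proof (cases "p1 A = 2 * l - 2")
    case True
    have "int (p1 A) * (int l - 1) = 2 * int l * int l - 4 * int l + 2"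
      using True l by (simp add: algebra_simps of_nat_diff)
    then show ?thesis
      using square[OF rows True l] l by linarith
  next
    case False
    then have "ssz A \<ge> 3 * int l - 1" "pmax A = int (p1 A)"
      using rows cols unfolding ssz_def pmax_def by auto
    then have "vac A < int (p1 A) - 1"
      using not_B rows unfolding B_cluster_def Let_def by simp
    moreover have "int (p1 A) * (int l - 1) = int (p1 A) * int l - int (p1 A)"
      by (simp add: algebra_simps)
    ultimately show ?thesis
      unfolding vac_def rows by linarith
  qed
  show "int (card A) \<ge> 2 * int l * int l - 2 * int l - 2"
    if rows: "p2 A = l + 1" and cols: "p1 A = 2 * l - 3" and l: "l \<ge> 4"
  proof -
    have cols': "int (p1 A) = 2 * int l - 3"
      using cols l by simp
    then have "ssz A = 3 * int l - 2" "pmin A = int l + 1"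
      using rows l unfolding ssz_def pmin_def by simp_all
    then have "vac A < int l"
      using not_B rows unfolding B_cluster_def Let_def by simp
    moreover have "int (p1 A) * int (p2 A) = 2 * int l * int l - int l - 3"
      unfolding cols' rows by (simp add: algebra_simps)
    ultimately show ?thesis
      unfolding vac_def by linarith
  qed
qed

lemma B_cluster_exit:
  assumes B: "B_cluster l A" and not_B': "\<not> B_cluster l A'" and s: "ssz A' = ssz A - 1"
    and rows: "p2 A \<ge> l" and l: "l \<ge> 1"
  shows "p2 A = l" and "p1 A \<ge> 2 * l - 1" and "int (card A) \<le> int (p1 A) * (int l - 1) + 1"
    and "p2 A' \<ge> l"
proof -
  have "ssz A' \<ge> 3 * int l - 2"
    using not_B' unfolding B_cluster_def Let_def by auto
  then have s_A: "ssz A \<ge> 3 * int l - 1"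
    using s by simp
  then have vac_A: "p2 A = l \<and> vac A \<ge> pmax A - 1"
    using B rows unfolding B_cluster_def Let_def by auto
  then show rows_A: "p2 A = l"
    by simp
  then show cols_A: "p1 A \<ge> 2 * l - 1"
    using s_A unfolding ssz_def by simp
  then have "pmax A = int (p1 A)"
    using rows_A l unfolding pmax_def by simp
  then show "int (card A) \<le> int (p1 A) * (int l - 1) + 1"
    using vac_A unfolding vac_def rows_A by (simp add: algebra_simps)
  show "p2 A' \<ge> l"
    using not_B' s_A s unfolding B_cluster_def Let_def by auto
qed

lemma p1_le_p1_slide_add_1:
  fixes A :: "site set"
  assumes "finite A" and "p \<in> A"
  shows "p1 A \<le> p1 (insert q (A - {p})) + 1"
proof -
  have "fst ` A = insert (fst p) (fst ` (A - {p}))"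
    using assms(2) by auto
  then show ?thesis
    unfolding p1_def using assms(1) by (simp add: card_insert_if)
qed

lemma column_singleton_if_p1_slide_less:
  fixes A :: "site set"
  assumes fin: "finite A" and p: "p \<in> A" and less: "p1 (insert q (A - {p})) < p1 A"
  shows "\<forall>z\<in>A. fst z = fst p \<longrightarrow> z = p" and "fst q \<in> fst ` (A - {p})"
proof -
  let ?F = "fst ` (A - {p})"
  have finF: "finite ?F"
    using fin by simp
  have cols: "p1 A = card (insert (fst p) ?F)" "p1 (insert q (A - {p})) = card (insert (fst q) ?F)"
    unfolding p1_def using p by (auto intro: arg_cong[where f = card])
  have "fst p \<notin> ?F"
  proof
    assume "fst p \<in> ?F"
    then have "p1 A = card ?F"
      using cols(1) by (simp add: insert_absorb)
    moreover have "card ?F \<le> p1 (insert q (A - {p}))"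
      using cols(2) finF by (simp add: card_insert_le)
    ultimately show False
      using less by linarith
  qed
  show "\<forall>z\<in>A. fst z = fst p \<longrightarrow> z = p"
  proof (intro ballI impI, rule ccontr)
    fix z assume "z \<in> A" "fst z = fst p" "z \<noteq> p"
    then have "fst z \<in> ?F"
      by (intro imageI) simp
    with \<open>fst p \<notin> ?F\<close> \<open>fst z = fst p\<close> show False
      by simp
  qed
  show "fst q \<in> ?F"
  proof (rule ccontr)
    assume "fst q \<notin> ?F"
    then have "p1 (insert q (A - {p})) = card ?F + 1"
      using cols(2) finF by simp
    moreover have "p1 A \<le> card ?F + 1"
      using cols(1) finF by (simp add: card_insert_if)
    ultimately show False
      using less by linarith
  qed
qed

lemma p2_le_slide:
  fixes A A' :: "site set"
  assumes "finite A" and "A' \<subseteq> insert q (A - {p})"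
  shows "p2 A' \<le> p2 A + 1"
proof -
  have "snd ` A' \<subseteq> insert (snd q) (snd ` A)"
    using assms(2) by auto
  then have "p2 A' \<le> card (insert (snd q) (snd ` A))"
    unfolding p2_def using assms(1) by (simp add: card_mono)
  then show ?thesis
    unfolding p2_def using assms(1) by (simp add: card_insert_if split: if_splits)
qed

lemma card_lt_after_slide:
  fixes A A' :: "site set" and p q :: site and l :: nat
  assumes fin: "finite A" and no_isolated: "\<forall>z\<in>A. \<exists>y\<in>A. nbr z y"
    and p: "p \<in> A" and q: "q \<notin> A" and pq: "nbr p q" and A': "A' \<subseteq> insert q (A - {p})"
    and rows: "p2 A = l" and l: "l \<ge> 3" and cols: "p1 A \<ge> 2 * l - 1"
    and ends: "card (horiz_ends 1 A) \<le> l + 1"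
    and tight: "card (horiz_ends 1 A) = l + 1 \<Longrightarrow>
      p1 A = 2 * l - 1 \<and> int (card A) = int (p1 A) * (int l - 1) + 1"
    and rows': "p2 A' \<ge> l" and size': "p1 A' + p2 A' + 1 = p1 A + l"
    and not_B': "\<not> B_cluster l A'"
  shows "card A' < card A"
proof (rule ccontr)
  assume "\<not> card A' < card A"
  moreover have fin': "finite (insert q (A - {p}))"
    using fin by simp
  moreover have "card (insert q (A - {p})) = card A"
  proof -
    have "card (insert q (A - {p})) = Suc (card (A - {p}))"
      using fin q by (simp add: card_insert_disjoint)
    then show ?thesis
      using card.remove[OF fin p] by linarith
  qed
  ultimately have A'_eq: "A' = insert q (A - {p})" and card_eq: "card A' = card A"
    using card_subset_eq[OF fin' A'] card_mono[OF fin' A'] by simp_all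
  have "p2 A' = l" "p1 A' + 1 = p1 A"
    using p2_le_slide[OF fin A'] p1_le_p1_slide_add_1[OF fin p, of q] rows rows' size'
    unfolding A'_eq[symmetric] by linarith+
  then have "p1 (insert q (A - {p})) < p1 A"
    unfolding A'_eq by simp
  note alone = column_singleton_if_p1_slide_less[OF fin p this]
  then obtain u where u: "u \<in> A" "u \<noteq> p" "fst u = fst q"
    by force
  then have "fst q \<noteq> fst p"
    using alone(1) by auto
  then obtain d where d: "d = 1 \<or> d = -1" and q_eq: "q = (fst p - d, snd p)"
    using nbr_horizontal[OF pq] by (metis diff_diff_cancel diff_minus_eq_add prod.collapse)
  have upper: "int (card A) \<le> (int (p1 A) - 1) * (int l - 1) + 1"
  proof (rule card_le_if_column_singleton[OF fin no_isolated d _ _ _ u(1) _ rows l ends tight])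
    show "(fst p, snd p) \<in> A" "\<forall>z\<in>A. fst z = fst p \<longrightarrow> z = (fst p, snd p)"
      using p alone(1) by simp_all
    show "(fst p - d, snd p) \<notin> A" "fst u = fst p - d"
      using q q_eq u(3) by simp_all
  qed
  have lower: "int (card A') \<ge> int (p1 A') * (int l - 1) + 2"
    using card_lower_if_not_B_cluster(2)[OF not_B' \<open>p2 A' = l\<close>] cols \<open>p1 A' + 1 = p1 A\<close> l by simp
  have "int (p1 A) - 1 = int (p1 A')"
    using \<open>p1 A' + 1 = p1 A\<close> by simp
  then show False
    using upper lower card_eq by simp
qed

lemma slide_shape_if_card_less:
  fixes A A' :: "site set" and l :: nat
  assumes fin: "finite A" and A': "A' \<subseteq> insert q (A - {p})" and less: "card A' < card A"
    and rows: "p2 A = l" and l: "l \<ge> 2" and cols: "p1 A \<ge> 2 * l - 1"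
    and dense: "int (card A) \<le> int (p1 A) * (int l - 1) + 1"
    and rows': "p2 A' \<ge> l" and size': "p1 A' + p2 A' + 1 = p1 A + l"
    and not_B': "\<not> B_cluster l A'"
  shows "(p2 A' = l + 1 \<and> p1 A' + 2 = p1 A) \<or> (p2 A' = l \<and> p1 A' + 1 = p1 A \<and> p1 A \<ge> 2 * l)"
proof (cases "p2 A' = l")
  case True
  have "p1 A \<ge> 2 * l"
  proof (rule ccontr)
    assume "\<not> p1 A \<ge> 2 * l"
    then have "p1 A = 2 * l - 1" "p1 A' = 2 * l - 2"
      using cols size' True by linarith+
    then have "int (card A') \<ge> 2 * int l * int l - 3 * int l + 2"
      "int (card A) \<le> 2 * int l * int l - 3 * int l + 2"
      using card_lower_if_not_B_cluster(1)[OF not_B' True] dense l by (simp_all add: algebra_simps of_nat_diff)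
    then show False
      using less by linarith
  qed
  then show ?thesis
    using True size' by simp
next
  case False
  then show ?thesis
    using p2_le_slide[OF fin A'] rows rows' size' by simp
qed

section \<open>Clusters and energy of configurations\<close>

lemma cl_subset: "cl L \<eta> \<subseteq> \<eta> \<inter> Lam0 L"
  unfolding cl_def by blast

lemma finite_cl: "finite (cl L \<eta>)"
proof (rule finite_subset)
  show "cl L \<eta> \<subseteq> Lam L"
    using cl_subset unfolding Lam0_def by blast
  show "finite (Lam L)"
    unfolding Lam_def by simp
qed

lemma cl_eq_if_Lam0_eq: "\<eta> \<inter> Lam0 L = \<eta>' \<inter> Lam0 L \<Longrightarrow> cl L \<eta> = cl L \<eta>'"
  unfolding cl_def by blast

lemma bond_in_cl:
  assumes "nbr x y" and "x \<in> \<eta> \<inter> Lam0 L" and "y \<in> \<eta> \<inter> Lam0 L"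
  shows "x \<in> cl L \<eta>" and "y \<in> cl L \<eta>"
  using assms nbr_sym unfolding cl_def by blast+

lemma bonds_in_cl:
  assumes "\<And>x. nbr x (f x)"
  shows "{x. x \<in> Lam0 L \<and> f x \<in> Lam0 L \<and> x \<in> \<eta> \<and> f x \<in> \<eta>} = {z \<in> cl L \<eta>. f z \<in> cl L \<eta>}"
proof (intro equalityI subsetI)
  fix x assume "x \<in> {x. x \<in> Lam0 L \<and> f x \<in> Lam0 L \<and> x \<in> \<eta> \<and> f x \<in> \<eta>}"
  then show "x \<in> {z \<in> cl L \<eta>. f z \<in> cl L \<eta>}"
    using bond_in_cl[OF assms[of x]] by simp
next
  fix x assume "x \<in> {z \<in> cl L \<eta>. f z \<in> cl L \<eta>}"
  then show "x \<in> {x. x \<in> Lam0 L \<and> f x \<in> Lam0 L \<and> x \<in> \<eta> \<and> f x \<in> \<eta>}"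
    using cl_subset by blast
qed

lemma hbonds_eq_horiz_bonds: "hbonds L \<eta> = horiz_bonds (cl L \<eta>)"
  unfolding hbonds_def horiz_bonds_def
  using bonds_in_cl[of "\<lambda>x. (fst x + 1, snd x)"] by (simp add: nbr_def)

lemma vbonds_eq_vert_bonds: "vbonds L \<eta> = vert_bonds (cl L \<eta>)"
  unfolding vbonds_def vert_bonds_def
  using bonds_in_cl[of "\<lambda>x. (fst x, snd x + 1)"] by (simp add: nbr_def)

lemma card_occupied_eq_nfree_add_card_cl: "card (\<eta> \<inter> Lam L) = nfree L \<eta> + card (cl L \<eta>)"
proof -
  have split: "\<eta> \<inter> Lam L = free_particles L \<eta> \<union> cl L \<eta>"
    and disjoint: "free_particles L \<eta> \<inter> cl L \<eta> = {}"
    unfolding free_particles_def cl_def Lam0_def by blast+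
  have "finite (\<eta> \<inter> Lam L)"
    unfolding Lam_def by simp
  then have "finite (free_particles L \<eta>)"
    using split by simp
  then show ?thesis
    unfolding nfree_def split using card_Un_disjoint[OF _ finite_cl disjoint] by simp
qed

lemma cl_eq_if_nfree_0:
  assumes "nfree L \<eta> = 0" and "\<eta> \<subseteq> Lam L"
  shows "cl L \<eta> = \<eta>"
proof -
  have "finite (free_particles L \<eta>)"
    unfolding free_particles_def Lam_def by simp
  then have "free_particles L \<eta> = {}"
    using assms(1) unfolding nfree_def by simp
  then have "\<eta> \<inter> Lam L \<subseteq> cl L \<eta>"
    unfolding free_particles_def cl_def Lam0_def by blast
  then show ?thesis
    using assms(2) cl_subset by blast
qed

lemma H_eq_ends:
  "H L U1 U2 \<Delta> \<eta> = (U1 + U2 - eps U1 U2 \<Delta>) * nfree L \<eta> + U1 * card (horiz_ends 1 (cl L \<eta>))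
     + U2 * card (top_ends (cl L \<eta>)) - eps U1 U2 \<Delta> * card (cl L \<eta>)"
proof -
  have hb: "real (hbonds L \<eta>) = real (card (cl L \<eta>)) - real (card (horiz_ends 1 (cl L \<eta>)))"
    using card_eq_horiz_bonds_add_ends[OF finite_cl] unfolding hbonds_eq_horiz_bonds
    by (metis add_diff_cancel_right' of_nat_add)
  have vb: "real (vbonds L \<eta>) = real (card (cl L \<eta>)) - real (card (top_ends (cl L \<eta>)))"
    using card_eq_vert_bonds_add_ends[OF finite_cl] unfolding vbonds_eq_vert_bonds
    by (metis add_diff_cancel_right' of_nat_add)
  show ?thesis
    unfolding H_def hb vb card_occupied_eq_nfree_add_card_cl eps_def by (simp add: algebra_simps)
qed

lemma is_move_slide_if_cl_changes:
  assumes move: "is_move L \<eta>b \<eta>" and changes: "cl L \<eta> \<noteq> cl L \<eta>b"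
  obtains p q where "p \<in> \<eta>b" "q \<notin> \<eta>b" "q \<in> Lam L" "nbr p q" "\<eta> = insert q (\<eta>b - {p})"
proof -
  have "\<eta> \<inter> Lam0 L \<noteq> \<eta>b \<inter> Lam0 L"
    using changes cl_eq_if_Lam0_eq by blast
  then have "\<not> (\<exists>x \<in> bdry L. \<eta> = \<eta>b - {x} \<or> \<eta> = insert x \<eta>b)"
    unfolding Lam0_def by blast
  then obtain x y where xy: "x \<in> Lam L" "y \<in> Lam L" "nbr x y" "\<eta> = swap x y \<eta>b"
    using move unfolding is_move_def by blast
  have "\<eta> \<noteq> \<eta>b"
    using move unfolding is_move_def by blast
  then consider "x \<in> \<eta>b" "y \<notin> \<eta>b" | "y \<in> \<eta>b" "x \<notin> \<eta>b"
    using xy(4) unfolding swap_def by fastforce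
  then show ?thesis
  proof cases
    case 1
    then have "\<eta> = insert y (\<eta>b - {x})"
      using xy(4) unfolding swap_def by auto
    then show ?thesis
      using that[of x y] xy 1 by blast
  next
    case 2
    then have "\<eta> = insert x (\<eta>b - {y})"
      using xy(4) unfolding swap_def by auto
    then show ?thesis
      using that[of y x] xy 2 nbr_sym by blast
  qed
qed

definition Gamma_at :: "real \<Rightarrow> real \<Rightarrow> real \<Rightarrow> real \<Rightarrow> real" where
  "Gamma_at U1 U2 e l = U1 * l + 2 * U2 * l + U1 - U2 - 2 * e * l\<^sup>2 + 3 * e * l - 2 * e"

lemma Gamma_eq_Gamma_at: "Gamma U1 U2 \<Delta> = Gamma_at U1 U2 (eps U1 U2 \<Delta>) (lstar U1 U2 \<Delta>)"
  unfolding Gamma_def Gamma_at_def Let_def by simp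

lemma lstar_bounds:
  assumes e_pos: "0 < eps U1 U2 \<Delta>" and e_small: "eps U1 U2 \<Delta> < U2 / 3"
  shows "lstar U1 U2 \<Delta> \<ge> 4" and "eps U1 U2 \<Delta> * (real (lstar U1 U2 \<Delta>) - 1) < U2"
proof -
  define e where "e = eps U1 U2 \<Delta>"
  have "3 < U2 / e"
    using e_pos e_small unfolding e_def by (simp add: field_simps)
  then have l: "real (lstar U1 U2 \<Delta>) = of_int \<lceil>U2 / e\<rceil>"
    unfolding lstar_def e_def[symmetric] by (simp add: order.strict_trans2[OF _ le_of_int_ceiling])
  show "lstar U1 U2 \<Delta> \<ge> 4"
    using \<open>3 < U2 / e\<close> le_of_int_ceiling[of "U2 / e"] l by linarith
  have "e * (real (lstar U1 U2 \<Delta>) - 1) < e * (U2 / e)"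
    using l ceiling_correct[of "U2 / e"] e_pos unfolding e_def by (intro mult_strict_left_mono) auto
  then show "eps U1 U2 \<Delta> * (real (lstar U1 U2 \<Delta>) - 1) < U2"
    using e_pos unfolding e_def by simp
qed

lemma energy_le_Gamma_at_bounds:
  fixes U1 U2 e l n r t c a :: real
  assumes U1: "U1 > 0" and U2: "U2 > 0" and e: "e > 0" and K: "e * (l - 1) < U2" and l: "l \<ge> 2"
    and r: "r \<ge> l" and t: "t \<ge> c" and c: "c \<ge> 2 * l - 1" and a: "a \<le> c * (l - 1) + 1"
    and n: "n \<ge> 0"
    and energy: "(U1 + U2 - e) * n + U1 * r + U2 * t - e * a \<le> Gamma_at U1 U2 e l"
  shows "n < 1" and "r \<le> l + 1" and "r = l + 1 \<Longrightarrow> c = 2 * l - 1 \<and> a = c * (l - 1) + 1"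
proof -
  define K where "K = U2 - e * (l - 1)"
  have K_pos: "K > 0"
    using K unfolding K_def by simp
  have "e * 1 \<le> e * (l - 1)"
    using e l by (intro mult_left_mono) auto
  then have e_U2: "e < U2"
    using K by simp
  \<comment> \<open>\<open>Gamma_at\<close> is the value of the energy at \<open>n = 0\<close>, \<open>r = l + 1\<close>, \<open>t = c = 2l - 1\<close>, \<open>a = c(l - 1) + 1\<close>.\<close>
  define X where "X = U2 * (t - c) + (c - (2 * l - 1)) * K + e * (c * (l - 1) + 1 - a)"
  have "(U1 + U2 - e) * n + U1 * r + U2 * t - e * a - Gamma_at U1 U2 e l
      = (U1 + U2 - e) * n + U1 * (r - l - 1) + X"
    unfolding X_def K_def Gamma_at_def power2_eq_square by (simp add: algebra_simps)
  then have main: "(U1 + U2 - e) * n + U1 * (r - l - 1) + X \<le> 0"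
    using energy by linarith
  have X_parts: "U2 * (t - c) \<ge> 0" "(c - (2 * l - 1)) * K \<ge> 0" "e * (c * (l - 1) + 1 - a) \<ge> 0"
    using U2 t c K_pos e a by simp_all
  then have X_nonneg: "X \<ge> 0"
    unfolding X_def by linarith
  have "U1 * (r - l - 1) \<ge> U1 * (- 1)"
    using r U1 by (intro mult_left_mono) auto
  moreover have "(U1 + U2 - e) * n \<ge> (U1 + U2 - e) * 1" if "n \<ge> 1"
    using that e_U2 U1 by (intro mult_left_mono) auto
  ultimately show "n < 1"
    using main X_nonneg e_U2 by (cases "n \<ge> 1") auto
  have free_nonneg: "(U1 + U2 - e) * n \<ge> 0"
    using n e_U2 U1 by simp
  show "r \<le> l + 1"
  proof (rule ccontr)
    assume "\<not> r \<le> l + 1"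
    then have "U1 * (r - l - 1) > 0"
      using U1 by simp
    then show False
      using main X_nonneg free_nonneg by linarith
  qed
  assume "r = l + 1"
  then have "X \<le> 0"
    using main free_nonneg by simp
  then have "(c - (2 * l - 1)) * K = 0" "e * (c * (l - 1) + 1 - a) = 0"
    using X_parts unfolding X_def by linarith+
  then show "c = 2 * l - 1 \<and> a = c * (l - 1) + 1"
    using K_pos e by simp
qed

lemma energy_gt_Gamma_at_if_free:
  fixes U1 U2 e l n r t c a :: real
  assumes U2: "U2 > 0" and U12: "U1 > U2" and e: "e > 0" and K: "e * (l - 1) < U2"
    and n: "n \<ge> 1" and a: "a \<le> c * (l - 1) + 1 - n" and c: "c \<ge> 2 * l - 1"
    and shape: "(r \<ge> l + 1 \<and> t \<ge> c - 2) \<or> (r \<ge> l \<and> t \<ge> c - 1 \<and> c \<ge> 2 * l)"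
  shows "(U1 + U2 - e) * n + U1 * r + U2 * t - e * a > Gamma_at U1 U2 e l"
proof -
  define K where "K = U2 - e * (l - 1)"
  have K_pos: "K > 0"
    using K unfolding K_def by simp
  define M where "M = U1 * (r - l - 1) + U2 * (t - c) + (c - 2 * l + 1) * K"
  have "(U1 + U2 - e) * n + U1 * r + U2 * t - e * a - Gamma_at U1 U2 e l \<ge> (U1 + U2) * n + M"
  proof -
    have "e * a \<le> e * (c * (l - 1) + 1 - n)"
      using e a by (intro mult_left_mono) auto
    then show ?thesis
      unfolding M_def K_def Gamma_at_def power2_eq_square by (simp add: algebra_simps)
  qed
  moreover have "(U1 + U2) * n \<ge> (U1 + U2) * 1"
    using n U12 U2 by (intro mult_left_mono) auto
  moreover have "U1 + U2 + M > 0"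
    using shape
  proof
    assume h: "r \<ge> l + 1 \<and> t \<ge> c - 2"
    have "U2 * (t - c) \<ge> U2 * (- 2)"
      using h U2 by (intro mult_left_mono) auto
    moreover have "U1 * (r - l - 1) \<ge> 0" "(c - 2 * l + 1) * K \<ge> 0"
      using h U12 U2 c K_pos by simp_all
    ultimately show ?thesis
      unfolding M_def using U12 by linarith
  next
    assume h: "r \<ge> l \<and> t \<ge> c - 1 \<and> c \<ge> 2 * l"
    have "U1 * (r - l - 1) \<ge> U1 * (- 1)" "U2 * (t - c) \<ge> U2 * (- 1)"
      using h U12 U2 by (intro mult_left_mono; simp)+
    moreover have "(c - 2 * l + 1) * K \<ge> 1 * K"
      using h K_pos by (intro mult_right_mono) auto
    ultimately show ?thesis
      unfolding M_def using K_pos by linarith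
  qed
  ultimately show ?thesis
    by (smt (verit))
qed

locale exit_slide =
  fixes L l :: nat and \<eta>b \<eta> :: config and p q :: site
  assumes inside: "\<eta>b \<subseteq> Lam L" "q \<in> Lam L"
    and slide: "p \<in> \<eta>b" "q \<notin> \<eta>b" "nbr p q" "\<eta> = insert q (\<eta>b - {p})"
    and B_before: "B_cluster l (cl L \<eta>b)"
    and not_B_after: "\<not> B_cluster l (cl L \<eta>)"
    and s_drop: "ssz (cl L \<eta>) = ssz (cl L \<eta>b) - 1"
    and rows_before: "p2 (cl L \<eta>b) \<ge> l"
    and l_ge_4: "l \<ge> 4"
begin

abbreviation "A \<equiv> cl L \<eta>b"
abbreviation "A' \<equiv> cl L \<eta>"

lemma exit_shape:
  shows rows_eq: "p2 A = l" and cols_ge: "p1 A \<ge> 2 * l - 1"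
    and card_le: "int (card A) \<le> int (p1 A) * (int l - 1) + 1"
    and rows_after: "p2 A' \<ge> l" and size_after: "p1 A' + p2 A' + 1 = p1 A + l"
proof -
  note exit = B_cluster_exit[OF B_before not_B_after s_drop rows_before]
  show "p2 A = l" "p1 A \<ge> 2 * l - 1" "int (card A) \<le> int (p1 A) * (int l - 1) + 1" "p2 A' \<ge> l"
    using exit l_ge_4 by simp_all
  then show "p1 A' + p2 A' + 1 = p1 A + l"
    using s_drop unfolding ssz_def by linarith
qed

lemma particle_balance: "nfree L \<eta> + card A' = nfree L \<eta>b + card A"
proof -
  have fin: "finite \<eta>b"
    using inside(1) finite_subset unfolding Lam_def by blast
  have "card \<eta> = Suc (card (\<eta>b - {p}))"
    using slide fin by (simp add: card_insert_disjoint)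
  then have "card \<eta> = card \<eta>b"
    using card.remove[OF fin slide(1)] by linarith
  moreover have "\<eta> \<subseteq> Lam L"
    using inside slide(4) by blast
  ultimately have "card (\<eta> \<inter> Lam L) = card (\<eta>b \<inter> Lam L)"
    using inside(1) by (simp add: Int_absorb2)
  then show ?thesis
    unfolding card_occupied_eq_nfree_add_card_cl by simp
qed

lemma cluster_shrinks:
  assumes no_free: "nfree L \<eta>b = 0" and ends: "card (horiz_ends 1 A) \<le> l + 1"
    and tight: "card (horiz_ends 1 A) = l + 1 \<Longrightarrow>
      p1 A = 2 * l - 1 \<and> int (card A) = int (p1 A) * (int l - 1) + 1"
  shows "card A' < card A"
    and "(p2 A' = l + 1 \<and> p1 A' + 2 = p1 A) \<or> (p2 A' = l \<and> p1 A' + 1 = p1 A \<and> p1 A \<ge> 2 * l)"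
proof -
  have A: "A = \<eta>b"
    using cl_eq_if_nfree_0[OF no_free inside(1)] .
  have no_isolated: "\<forall>z\<in>A. \<exists>y\<in>A. nbr z y"
    using A unfolding cl_def by blast
  have sub: "A' \<subseteq> insert q (A - {p})"
    using cl_subset[of L \<eta>] slide(4) A by blast
  show less: "card A' < card A"
    using card_lt_after_slide[OF finite_cl no_isolated _ _ slide(3) sub rows_eq _ cols_ge ends tight
        rows_after size_after not_B_after] slide(1,2) A l_ge_4 by simp
  show "(p2 A' = l + 1 \<and> p1 A' + 2 = p1 A) \<or> (p2 A' = l \<and> p1 A' + 1 = p1 A \<and> p1 A \<ge> 2 * l)"
    using slide_shape_if_card_less[OF finite_cl sub less rows_eq _ cols_ge card_le rows_after size_after
        not_B_after] l_ge_4 by simp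
qed

lemma not_in_P2: "\<eta>b \<notin> P2 L l"
  using cols_ge l_ge_4 unfolding P2_def by auto

lemma not_in_P1: "\<eta>b \<notin> P1 L l"
proof
  assume "\<eta>b \<in> P1 L l"
  then have no_free: "nfree L \<eta>b = 0" and vac: "vac A = 2 * int l - 2" and g2: "g2' A = 1"
    and cols: "p1 A = 2 * l - 1"
    unfolding P1_def by simp_all
  have "vlen A = 2 * l + 2"
    using g2 rows_eq unfolding g2'_def g2_def by linarith
  then have ends: "card (horiz_ends 1 A) = l + 1"
    using vlen_eq_horiz_ends[OF finite_cl] by simp
  have cols': "int (p1 A) = 2 * int l - 1"
    using cols l_ge_4 by simp
  have card_A: "int (card A) = 2 * int l * int l - 3 * int l + 2"
    using vac rows_eq unfolding vac_def cols' by (simp add: algebra_simps)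
  then have "p1 A = 2 * l - 1 \<and> int (card A) = int (p1 A) * (int l - 1) + 1"
    using cols unfolding cols' by (simp add: algebra_simps)
  note shrink = cluster_shrinks[OF no_free eq_imp_le[OF ends] this]
  then have "p2 A' = l + 1" "p1 A' = 2 * l - 3"
    using cols l_ge_4 by auto
  then have "int (card A') \<ge> 2 * int l * int l - 2 * int l - 2"
    using card_lower_if_not_B_cluster(3)[OF not_B_after] l_ge_4 by simp
  then show False
    using shrink(1) card_A l_ge_4 by linarith
qed

lemma bounds_before_if_H_le_Gamma:
  assumes U1: "U1 > 0" and U2: "U2 > 0" and l: "l = lstar U1 U2 \<Delta>" and e: "0 < eps U1 U2 \<Delta>"
    and K: "eps U1 U2 \<Delta> * (real l - 1) < U2" and H: "H L U1 U2 \<Delta> \<eta>b \<le> Gamma U1 U2 \<Delta>"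
  shows "nfree L \<eta>b = 0" and "card (horiz_ends 1 A) \<le> l + 1"
    and "card (horiz_ends 1 A) = l + 1 \<Longrightarrow>
      p1 A = 2 * l - 1 \<and> int (card A) = int (p1 A) * (int l - 1) + 1"
proof -
  have "real_of_int (int (card A)) \<le> real_of_int (int (p1 A) * (int l - 1) + 1)"
    using card_le by (simp only: of_int_le_iff)
  then have card_le': "real (card A) \<le> real (p1 A) * (real l - 1) + 1"
    by simp
  have energy: "(U1 + U2 - eps U1 U2 \<Delta>) * real (nfree L \<eta>b) + U1 * real (card (horiz_ends 1 A))
      + U2 * real (card (top_ends A)) - eps U1 U2 \<Delta> * real (card A)
      \<le> Gamma_at U1 U2 (eps U1 U2 \<Delta>) (real l)"
    using H unfolding H_eq_ends Gamma_eq_Gamma_at l[symmetric] by simp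
  have "real l \<ge> 2" "real (card (horiz_ends 1 A)) \<ge> real l" "real (card (top_ends A)) \<ge> real (p1 A)"
    "real (p1 A) \<ge> 2 * real l - 1"
    using l_ge_4 card_rows_le_horiz_ends[OF finite_cl, of 1] rows_eq card_cols_le_top_ends[OF finite_cl]
      cols_ge by auto
  note bounds = energy_le_Gamma_at_bounds[OF U1 U2 e K this card_le' _ energy]
  show "nfree L \<eta>b = 0"
    using bounds(1) by simp
  show "card (horiz_ends 1 A) \<le> l + 1"
    using bounds(2) by linarith
  assume "card (horiz_ends 1 A) = l + 1"
  then have "real (p1 A) = 2 * real l - 1" "real (card A) = real (p1 A) * (real l - 1) + 1"
    using bounds(3) by simp_all
  then have "p1 A = 2 * l - 1"
    "real_of_int (int (card A)) = real_of_int (int (p1 A) * (int l - 1) + 1)"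
    using l_ge_4 by simp_all
  then show "p1 A = 2 * l - 1 \<and> int (card A) = int (p1 A) * (int l - 1) + 1"
    by (simp only: of_int_eq_iff)
qed

lemma H_after_gt_Gamma:
  assumes U2: "U2 > 0" and U12: "U1 > U2" and l: "l = lstar U1 U2 \<Delta>" and e: "0 < eps U1 U2 \<Delta>"
    and K: "eps U1 U2 \<Delta> * (real l - 1) < U2"
    and no_free: "nfree L \<eta>b = 0" and ends: "card (horiz_ends 1 A) \<le> l + 1"
    and tight: "card (horiz_ends 1 A) = l + 1 \<Longrightarrow>
      p1 A = 2 * l - 1 \<and> int (card A) = int (p1 A) * (int l - 1) + 1"
  shows "H L U1 U2 \<Delta> \<eta> > Gamma U1 U2 \<Delta>"
proof -
  note shrink = cluster_shrinks[OF no_free ends tight]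
  have balance: "nfree L \<eta> + card A' = card A"
    using particle_balance no_free by simp
  have "real_of_int (int (card A)) \<le> real_of_int (int (p1 A) * (int l - 1) + 1)"
    using card_le by (simp only: of_int_le_iff)
  then have "real (card A') \<le> real (p1 A) * (real l - 1) + 1 - real (nfree L \<eta>)"
    using balance by (simp add: of_nat_add[symmetric] del: of_nat_add)
  moreover have "real (nfree L \<eta>) \<ge> 1"
    using shrink(1) balance by simp
  moreover have "real (p1 A) \<ge> 2 * real l - 1"
    using cols_ge by linarith
  moreover have "p2 A' \<le> card (horiz_ends 1 A')" "p1 A' \<le> card (top_ends A')"
    using card_rows_le_horiz_ends[OF finite_cl, of 1] card_cols_le_top_ends[OF finite_cl] by auto
  then have "(real (card (horiz_ends 1 A')) \<ge> real l + 1 \<and> real (card (top_ends A')) \<ge> real (p1 A) - 2)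
      \<or> (real (card (horiz_ends 1 A')) \<ge> real l \<and> real (card (top_ends A')) \<ge> real (p1 A) - 1
         \<and> real (p1 A) \<ge> 2 * real l)"
    using shrink(2) by auto
  ultimately have "Gamma_at U1 U2 (eps U1 U2 \<Delta>) (real l)
      < (U1 + U2 - eps U1 U2 \<Delta>) * real (nfree L \<eta>) + U1 * real (card (horiz_ends 1 A'))
        + U2 * real (card (top_ends A')) - eps U1 U2 \<Delta> * real (card A')"
    by (intro energy_gt_Gamma_at_if_free[OF U2 U12 e K]) simp_all
  then show ?thesis
    unfolding H_eq_ends Gamma_eq_Gamma_at l[symmetric] by simp
qed

lemma max_H_gt_Gamma:
  assumes U2: "U2 > 0" and U12: "U1 > U2" and l: "l = lstar U1 U2 \<Delta>" and e: "0 < eps U1 U2 \<Delta>"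
    and K: "eps U1 U2 \<Delta> * (real l - 1) < U2"
  shows "max (H L U1 U2 \<Delta> \<eta>b) (H L U1 U2 \<Delta> \<eta>) > Gamma U1 U2 \<Delta>"
proof (cases "H L U1 U2 \<Delta> \<eta>b \<le> Gamma U1 U2 \<Delta>")
  case True
  have U1: "U1 > 0"
    using U2 U12 by simp
  note before = bounds_before_if_H_le_Gamma[OF U1 U2 l e K True]
  show ?thesis
    using H_after_gt_Gamma[OF U2 U12 l e K before] by simp
qed simp

end

lemma leaving_Bset_costs_more_than_Gamma:
  assumes U2: "U2 > 0" and U12: "U1 > U2"
    and e_pos: "0 < eps U1 U2 \<Delta>" and e_small: "eps U1 U2 \<Delta> < U2 / 3"
    and move: "is_move L \<eta>b \<eta>" and B: "\<eta>b \<in> Bset L (lstar U1 U2 \<Delta>)"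
    and not_B: "\<eta> \<notin> Bset L (lstar U1 U2 \<Delta>)"
    and s_drop: "ssz (cl L \<eta>) - ssz (cl L \<eta>b) = -1" and rows: "p2 (cl L \<eta>b) \<ge> lstar U1 U2 \<Delta>"
  shows "max (H L U1 U2 \<Delta> \<eta>b) (H L U1 U2 \<Delta> \<eta>) > Gamma U1 U2 \<Delta>"
    and "\<eta>b \<notin> P1 L (lstar U1 U2 \<Delta>) \<union> P2 L (lstar U1 U2 \<Delta>)"
proof -
  note l = lstar_bounds[OF e_pos e_small]
  have "cl L \<eta> \<noteq> cl L \<eta>b"
    using s_drop by auto
  then obtain p q where "p \<in> \<eta>b" "q \<notin> \<eta>b" "q \<in> Lam L" "nbr p q" "\<eta> = insert q (\<eta>b - {p})"
    by (rule is_move_slide_if_cl_changes[OF move])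
  then interpret exit_slide L "lstar U1 U2 \<Delta>" \<eta>b \<eta> p q
    using move B not_B s_drop rows l(1) by unfold_locales (auto simp: Bset_iff_B_cluster is_move_def)
  show "max (H L U1 U2 \<Delta> \<eta>b) (H L U1 U2 \<Delta> \<eta>) > Gamma U1 U2 \<Delta>"
    by (rule max_H_gt_Gamma[OF U2 U12 refl e_pos l(2)])
  show "\<eta>b \<notin> P1 L (lstar U1 U2 \<Delta>) \<union> P2 L (lstar U1 U2 \<Delta>)"
    using not_in_P1 not_in_P2 by blast
qed

theorem proposition4p4:
  fixes U1 U2 :: real
  assumes "U2 > 0" and "U1 > 2 * U2"
  shows "\<exists>\<epsilon>0 > 0. \<forall>(L::nat) (\<Delta>::real) \<eta>b \<eta>.
     \<Delta> > 0 \<longrightarrow> 0 < eps U1 U2 \<Delta> \<longrightarrow> eps U1 U2 \<Delta> < \<epsilon>0 \<longrightarrow>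
     U2 / eps U1 U2 \<Delta> \<notin> \<nat> \<longrightarrow>
     is_move L \<eta>b \<eta> \<longrightarrow> \<eta>b \<in> Bset L (lstar U1 U2 \<Delta>) \<longrightarrow>
     ssz (cl L \<eta>) - ssz (cl L \<eta>b) = -1 \<longrightarrow>
     p2 (cl L \<eta>b) \<ge> lstar U1 U2 \<Delta> \<longrightarrow>
       \<eta> \<in> Bset L (lstar U1 U2 \<Delta>)
     \<or> (\<eta>b \<in> P1 L (lstar U1 U2 \<Delta>) \<and> H L U1 U2 \<Delta> \<eta>b = Gamma U1 U2 \<Delta> \<and> \<eta> \<in> Bset L (lstar U1 U2 \<Delta>))
     \<or> (\<eta> \<notin> Bset L (lstar U1 U2 \<Delta>) \<and> max (H L U1 U2 \<Delta> \<eta>b) (H L U1 U2 \<Delta> \<eta>) > Gamma U1 U2 \<Delta> \<and>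
        \<eta>b \<notin> P1 L (lstar U1 U2 \<Delta>) \<union> P2 L (lstar U1 U2 \<Delta>))"
proof (intro exI[of _ "U2 / 3"] conjI allI impI)
  show "U2 / 3 > 0"
    using assms(1) by simp
  have U12: "U1 > U2"
    using assms by simp
  fix L :: nat and \<Delta> :: real and \<eta>b \<eta> :: config
  assume "0 < eps U1 U2 \<Delta>" "eps U1 U2 \<Delta> < U2 / 3" "is_move L \<eta>b \<eta>"
    "\<eta>b \<in> Bset L (lstar U1 U2 \<Delta>)" "ssz (cl L \<eta>) - ssz (cl L \<eta>b) = -1"
    "p2 (cl L \<eta>b) \<ge> lstar U1 U2 \<Delta>"
  then show "\<eta> \<in> Bset L (lstar U1 U2 \<Delta>)
     \<or> (\<eta>b \<in> P1 L (lstar U1 U2 \<Delta>) \<and> H L U1 U2 \<Delta> \<eta>b = Gamma U1 U2 \<Delta> \<and> \<eta> \<in> Bset L (lstar U1 U2 \<Delta>))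
     \<or> (\<eta> \<notin> Bset L (lstar U1 U2 \<Delta>) \<and> max (H L U1 U2 \<Delta> \<eta>b) (H L U1 U2 \<Delta> \<eta>) > Gamma U1 U2 \<Delta> \<and>
        \<eta>b \<notin> P1 L (lstar U1 U2 \<Delta>) \<union> P2 L (lstar U1 U2 \<Delta>))"
    using leaving_Bset_costs_more_than_Gamma[OF assms(1) U12] by blast
qed

end
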